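(* Fix $x\in\mathbb{R}^d$ and a coordinate $i$ with $g_i(x)\ne0$. Let $\hat g^1,\dots,\hat g^M$ be independent random vectors such that for each $m$, $\mathrm{Prob}(\mathrm{sign}\,\hat g^m_i=\mathrm{sign}\,g_i)=\rho_i$ and $\mathrm{Prob}(\mathrm{sign}\,\hat g^m_i=-\mathrm{sign}\,g_i)=1-\rho_i$, where $\rho_i>\tfrac12$. Let $\hat g^{(M)}:=\sum_{m=1}^M\mathrm{sign}\,\hat g^m$ and $l=\lfloor\frac{M+1}2\rfloor$. Then $$\mathbb{E}\big[\mathrm{sign}(\hat g^{(M)}_i\cdot g_i)\big]=2I(\rho_i;l,l)-1.$$ In particular this expectation is the same for $M=2l-1$ and $M=2l$.
   Context: $\mathrm{sign}\,t=1,0,-1$ for $t>0,t=0,t<0$, entrywise on vectors. $I(p;a,b)=\frac{\int_0^pt^{a-1}(1-t)^{b-1}dt}{\int_0^1t^{a-1}(1-t)^{b-1}dt}$ is the regularized incomplete beta function. *)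

theory Defs
  imports "HOL-Probability.Probability"
begin

text \<open>Entrywise sign of a vector (note: Isabelle's sgn on vectors is normalisation,
  so we define the entrywise version explicitly).\<close>
definition sign_vec :: "real ^ 'd \<Rightarrow> real ^ 'd" where
  "sign_vec v = (\<chi> j. sgn (v $ j))"

definition inc_beta :: "real \<Rightarrow> real \<Rightarrow> real \<Rightarrow> real" where
  "inc_beta p a b =
     integral {0..p} (\<lambda>t. t powr (a - 1) * (1 - t) powr (b - 1)) /
     integral {0..1} (\<lambda>t. t powr (a - 1) * (1 - t) powr (b - 1))"

end

theory Submission
  imports Defs
begin

(*
  Let k be the number of votes whose i-th sign agrees with that of g_i(x). The votes are
  independent, so k is binomially distributed with parameters M and \<rho>, and the expectation
  is the majority bias  \<Sum>_k (M choose k) sgn(2k - M) \<rho>^k (1-\<rho>)^(M-k).  For M = 2l - 1 this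
  is 2 P(k \<ge> l) - 1, and the derivative in \<rho> of the binomial tail P(k \<ge> l) telescopes to a
  multiple of the beta density \<rho>^(l-1) (1-\<rho>)^(l-1), so the tail is I(\<rho>; l, l). For M = 2l the
  last vote only decides between a tie and a decision when the others are one short of a
  majority in either direction, and these two contributions cancel.
*)

definition binomial_tail :: "nat \<Rightarrow> nat \<Rightarrow> real \<Rightarrow> real" where
  "binomial_tail n j p = (\<Sum>k=j..n. real (n choose k) * p^k * (1-p)^(n-k))"

lemma binomial_tail_0: "1 \<le> j \<Longrightarrow> binomial_tail n j 0 = 0"
  unfolding binomial_tail_def by (intro sum.neutral) auto

lemma binomial_tail_1: "j \<le> n \<Longrightarrow> binomial_tail n j 1 = 1"
  unfolding binomial_tail_def by (subst sum.cong[OF refl, where h = "\<lambda>k. if k = n then 1 else 0"]) auto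

text \<open>The derivative of each term is a difference of consecutive terms of the sequence \<open>a\<close>
  below, so the derivative of the tail telescopes to its first term.\<close>
lemma binomial_tail_has_real_derivative:
  assumes "1 \<le> j" "j \<le> n"
  shows "(binomial_tail n j has_real_derivative
            real n * real ((n-1) choose (j-1)) * p^(j-1) * (1-p)^(n-j)) (at p)"
proof -
  define a where "a k = real n * real ((n-1) choose (k-1)) * p^(k-1) * (1-p)^(n-k)" for k
  define d where "d k = real (n choose k) *
    (real k * p^(k-1) * (1-p)^(n-k) - p^k * (real (n-k) * (1-p)^(n-k-1)))" for k
  have tele: "d k = a k - a (Suc k)" if k: "1 \<le> k" for k
  proof -
    obtain k' where k': "k = Suc k'" using k by (cases k) auto
    have e1: "real (n choose k) * real k = real n * real ((n-1) choose (k-1))"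
      by (metis binomial_absorption diff_Suc_1 k' mult.commute of_nat_mult)
    have e2: "real (n choose k) * real (n-k) = real n * real ((n-1) choose k)"
      by (metis binomial_absorb_comp mult.commute of_nat_mult)
    have "d k = (real (n choose k) * real k) * (p^(k-1) * (1-p)^(n-k))
                - (real (n choose k) * real (n-k)) * (p^k * (1-p)^(n-k-1))"
      unfolding d_def by (simp only: right_diff_distrib mult.assoc mult.left_commute)
    also have "\<dots> = a k - a (Suc k)"
      unfolding e1 e2 a_def by (simp add: algebra_simps)
    finally show ?thesis .
  qed
  have "(\<Sum>k=j..n. d k) = - (\<Sum>k=j..n. a (Suc k) - a k)"
    using assms tele by (simp add: sum_negf[symmetric])
  also have "\<dots> = a j - a (Suc n)"
    using assms by (simp add: sum_Suc_diff)
  also have "a (Suc n) = 0"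
    using assms by (simp add: a_def)
  finally have "(\<Sum>k=j..n. d k) = a j"
    by simp
  moreover have "(binomial_tail n j has_real_derivative (\<Sum>k=j..n. d k)) (at p)"
    unfolding binomial_tail_def d_def
    by (intro DERIV_sum) (auto intro!: derivative_eq_intros simp: algebra_simps)
  ultimately show ?thesis
    by (simp add: a_def)
qed

lemma inc_beta_eq_binomial_tail:
  assumes a: "1 \<le> a" and b: "1 \<le> b" and p: "0 \<le> p" "p \<le> 1"
  shows "inc_beta p (real a) (real b) = binomial_tail (a + b - 1) a p"
proof -
  define n where "n = a + b - 1"
  define c where "c = real n * real ((n-1) choose (a-1))"
  have n: "1 \<le> a" "a \<le> n" "n - a = b - 1"
    using a b unfolding n_def by auto
  have "c > 0"
    using n unfolding c_def by auto
  define f where "f t = t powr (real a - 1) * (1 - t) powr (real b - 1)" for t :: real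
  have f_tail: "(f has_integral binomial_tail n a y / c) {0..y}" if y: "0 \<le> y" "y \<le> 1" for y
  proof -
    have deriv: "((\<lambda>t. binomial_tail n a t / c) has_real_derivative t^(a-1) * (1-t)^(b-1)) (at t)"
      for t
    proof -
      have "real n * real ((n-1) choose (a-1)) * t^(a-1) * (1-t)^(n-a) / c = t^(a-1) * (1-t)^(b-1)"
        unfolding c_def[symmetric] n(3) using \<open>c > 0\<close> by simp
      then show ?thesis
        using DERIV_cdivide[OF binomial_tail_has_real_derivative[OF n(1,2)], of c t] by simp
    qed
    have "((\<lambda>t. t^(a-1) * (1-t)^(b-1)) has_integral binomial_tail n a y / c - binomial_tail n a 0 / c) {0..y}"
      by (rule fundamental_theorem_of_calculus[OF y(1)])
        (use deriv in \<open>auto simp: has_real_derivative_iff_has_vector_derivative[symmetric]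
          intro: has_field_derivative_at_within\<close>)
    then have poly: "((\<lambda>t. t^(a-1) * (1-t)^(b-1)) has_integral binomial_tail n a y / c) {0..y}"
      by (simp add: binomial_tail_0[OF n(1)])
    have exps: "real a - 1 = real (a-1)" "real b - 1 = real (b-1)"
      using a b by auto
    have f_poly: "f t = t^(a-1) * (1-t)^(b-1)" if "t \<in> {0..y} - {0, 1}" for t
      using that y unfolding f_def exps by (simp add: powr_realpow)
    show ?thesis
      by (rule has_integral_spike_finite[of "{0, 1}", OF _ _ poly]) (simp_all add: f_poly)
  qed
  have "inc_beta p (real a) (real b) = integral {0..p} f / integral {0..1} f"
    unfolding inc_beta_def f_def ..
  also have "\<dots> = binomial_tail n a p"
    using integral_unique[OF f_tail[OF p]] integral_unique[OF f_tail[of 1]] \<open>c > 0\<close>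
    by (simp add: binomial_tail_1[OF n(2)])
  finally show ?thesis
    unfolding n_def .
qed

definition majority_bias :: "nat \<Rightarrow> real \<Rightarrow> real" where
  "majority_bias M p = (\<Sum>k=0..M. real (M choose k) * sgn (2 * real k - real M) * p^k * (1-p)^(M-k))"

lemma majority_bias_odd:
  assumes "1 \<le> l"
  shows "majority_bias (2*l-1) p = 2 * binomial_tail (2*l-1) l p - 1"
proof -
  define n where "n = 2*l-1"
  define b where "b k = real (n choose k) * p^k * (1-p)^(n-k)" for k
  have "majority_bias n p = (\<Sum>k=0..n. 2 * (if l \<le> k then b k else 0) - b k)"
    unfolding majority_bias_def b_def using assms
    by (intro sum.cong) (auto simp: n_def of_nat_diff)
  also have "\<dots> = 2 * (\<Sum>k=0..n. if l \<le> k then b k else 0) - (\<Sum>k=0..n. b k)"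
    by (simp add: sum_subtractf sum_distrib_left)
  also have "(\<Sum>k=0..n. if l \<le> k then b k else 0) = sum b {k\<in>{0..n}. l \<le> k}"
    by (rule sum.inter_filter[symmetric]) simp
  also have "{k\<in>{0..n}. l \<le> k} = {l..n}"
    by auto
  also have "(\<Sum>k=0..n. b k) = 1"
    using binomial_ring[of p "1-p" n] by (simp add: b_def mult.assoc atLeast0AtMost)
  finally show ?thesis
    unfolding n_def b_def binomial_tail_def .
qed

lemma binomial_weighted_sum_Suc:
  fixes p q :: real
  shows "(\<Sum>k=0..Suc n. w k * real (Suc n choose k) * p^k * q^(Suc n - k))
       = (\<Sum>k=0..n. real (n choose k) * p^k * q^(n-k) * (p * w (Suc k) + q * w k))"
proof -
  have "(\<Sum>k=0..n. w k * real (n choose k) * p^k * q^(Suc n-k))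
      = (\<Sum>k=0..Suc n. w k * real (n choose k) * p^k * q^(Suc n-k))"
    by (simp add: sum.atLeast0_atMost_Suc)
  also have "\<dots> = w 0 * q^(Suc n)
      + (\<Sum>k=0..n. w (Suc k) * real (n choose Suc k) * p^(Suc k) * q^(n-k))"
    by (subst sum.atLeast0_atMost_Suc_shift) simp
  finally have shifted: "(\<Sum>k=0..n. w k * real (n choose k) * p^k * q^(Suc n-k)) = \<dots>" .
  have "(\<Sum>k=0..Suc n. w k * real (Suc n choose k) * p^k * q^(Suc n - k))
      = w 0 * q^(Suc n) + (\<Sum>k=0..n. w (Suc k) * real (Suc n choose Suc k) * p^(Suc k) * q^(n-k))"
    by (subst sum.atLeast0_atMost_Suc_shift) simp
  also have "\<dots> = (\<Sum>k=0..n. w (Suc k) * real (n choose k) * p^(Suc k) * q^(n-k))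
      + (\<Sum>k=0..n. w k * real (n choose k) * p^k * q^(Suc n-k))"
    unfolding shifted by (simp add: sum.distrib[symmetric] algebra_simps)
  also have "\<dots> = (\<Sum>k=0..n. real (n choose k) * p^k * q^(n-k) * (p * w (Suc k) + q * w k))"
    by (simp add: sum.distrib[symmetric] algebra_simps Suc_diff_le)
  finally show ?thesis .
qed

lemma binomial_middle_terms_balance:
  fixes p q :: real
  assumes "1 \<le> l"
  shows "real ((2*l-1) choose (l-1)) * p^(l-1) * q^(2*l-1-(l-1)) * p
       = real ((2*l-1) choose l) * p^l * q^(2*l-1-l) * q"
proof -
  obtain l' where l': "l = Suc l'"
    using assms by (cases l) auto
  have "(2*l-1) choose l' = (2*l-1) choose l"
    using binomial_symmetric[of l' "2*l-1"] l' by simp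
  moreover have "2*l-1 - l' = Suc l'" "2*l-1 - l = l'"
    using l' by auto
  ultimately show ?thesis
    unfolding l' by (simp add: algebra_simps)
qed

lemma majority_bias_even:
  assumes "1 \<le> l"
  shows "majority_bias (2*l) p = majority_bias (2*l-1) p"
proof -
  define n where "n = 2*l-1"
  have Sn: "2*l = Suc n"
    using assms unfolding n_def by simp
  define q where "q = 1 - p"
  define b where "b k = real (n choose k) * p^k * q^(n-k)" for k
  define w where "w k = sgn (2 * real k - real (Suc n))" for k
  have "majority_bias (2*l) p = (\<Sum>k=0..Suc n. w k * real (Suc n choose k) * p^k * q^(Suc n - k))"
    unfolding majority_bias_def Sn w_def q_def by (simp add: algebra_simps)
  also have "\<dots> = (\<Sum>k=0..n. b k * (p * w (Suc k) + q * w k))"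
    unfolding binomial_weighted_sum_Suc b_def ..
  also have "\<dots> = (\<Sum>k=0..n. b k * sgn (2 * real k - real n)
       + ((if k = l-1 then b k * p else 0) - (if k = l then b k * q else 0)))"
  proof (intro sum.cong refl)
    fix k
    have "real (Suc n) = 2 * real l"
      unfolding Sn[symmetric] by simp
    then have w: "w j = (if j < l then -1 else if j = l then 0 else 1)" for j
      unfolding w_def by (auto simp: sgn_real_def)
    have "sgn (2 * real k - real n) = (if k < l then -1 else 1)"
      using assms by (auto simp: n_def of_nat_diff sgn_real_def)
    then show "b k * (p * w (Suc k) + q * w k) = b k * sgn (2 * real k - real n)
       + ((if k = l-1 then b k * p else 0) - (if k = l then b k * q else 0))"
      unfolding w using assms by (auto simp: q_def algebra_simps)
  qed
  also have "\<dots> = (\<Sum>k=0..n. b k * sgn (2 * real k - real n))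
       + ((\<Sum>k=0..n. if k = l-1 then b k * p else 0) - (\<Sum>k=0..n. if k = l then b k * q else 0))"
    by (simp only: sum.distrib sum_subtractf)
  also have "(\<Sum>k=0..n. b k * sgn (2 * real k - real n)) = majority_bias n p"
    unfolding majority_bias_def b_def q_def by (simp add: mult_ac)
  also have "(\<Sum>k=0..n. if k = l-1 then b k * p else 0) = b (l-1) * p"
    using assms by (simp add: n_def)
  also have "(\<Sum>k=0..n. if k = l then b k * q else 0) = b l * q"
    using assms by (simp add: n_def)
  also have "b (l-1) * p = b l * q"
    unfolding b_def n_def using binomial_middle_terms_balance[OF assms] .
  finally show ?thesis
    unfolding n_def by simp
qed

lemma majority_bias_eq_inc_beta:
  assumes "1 \<le> M" "0 \<le> p" "p \<le> 1"
  shows "majority_bias M p = 2 * inc_beta p (real ((M + 1) div 2)) (real ((M + 1) div 2)) - 1"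
proof -
  define l where "l = (M + 1) div 2"
  have l: "1 \<le> l"
    using assms unfolding l_def by auto
  have "majority_bias M p = majority_bias (2*l-1) p"
  proof (cases "even M")
    case True
    then have "M = 2*l"
      unfolding l_def by auto
    then show ?thesis
      using majority_bias_even[OF l] by simp
  next
    case False
    then show ?thesis
      unfolding l_def by (simp add: odd_two_times_div_two_nat)
  qed
  also have "\<dots> = 2 * binomial_tail (2*l-1) l p - 1"
    by (rule majority_bias_odd[OF l])
  also have "binomial_tail (2*l-1) l p = inc_beta p (real l) (real l)"
    using inc_beta_eq_binomial_tail[OF l l assms(2,3)] by (simp add: mult_2)
  finally show ?thesis
    unfolding l_def .
qed

lemma sum_Pow_by_card:
  fixes h :: "nat \<Rightarrow> real"
  assumes "finite I"
  shows "(\<Sum>B\<in>Pow I. h (card B)) = (\<Sum>k=0..card I. real (card I choose k) * h k)"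
proof -
  have "(\<Sum>B\<in>Pow I. h (card B)) = (\<Sum>k=0..card I. \<Sum>B\<in>{B \<in> Pow I. card B = k}. h (card B))"
    by (rule sum.group[symmetric]) (use assms in \<open>auto intro: card_mono\<close>)
  also have "\<dots> = (\<Sum>k=0..card I. real (card I choose k) * h k)"
  proof (rule sum.cong[OF refl])
    fix k
    have "(\<Sum>B\<in>{B \<in> Pow I. card B = k}. h (card B)) = (\<Sum>B\<in>{B. B \<subseteq> I \<and> card B = k}. h k)"
      by (rule sum.cong) auto
    then show "(\<Sum>B\<in>{B \<in> Pow I. card B = k}. h (card B)) = real (card I choose k) * h k"
      using n_subsets[OF assms, of k] by simp
  qed
  finally show ?thesis .
qed

lemma sum_plus_minus:
  fixes f :: "'i \<Rightarrow> real"
  assumes "finite I" "\<And>m. m \<in> I \<Longrightarrow> f m = s \<or> f m = - s"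
  shows "(\<Sum>m\<in>I. f m) = s * (2 * real (card {m \<in> I. f m = s}) - real (card I))"
proof -
  have "(\<Sum>m\<in>I. f m) = (\<Sum>m\<in>I. if f m = s then s else - s)"
    using assms(2) by (intro sum.cong) auto
  also have "\<dots> = s * real (card {m \<in> I. f m = s}) - s * real (card {m \<in> I. f m \<noteq> s})"
    using assms(1) by (simp add: sum.If_cases Int_def)
  also have "card {m \<in> I. f m \<noteq> s} = card I - card {m \<in> I. f m = s}"
    using assms(1) by (subst card_Diff_subset[symmetric]) (auto intro: arg_cong[where f = card])
  finally show ?thesis
    using card_mono[OF assms(1), of "{m \<in> I. f m = s}"] by (auto simp: of_nat_diff algebra_simps)
qed

context prob_space
begin

lemma AE_eq_or_eq:
  assumes "{\<omega> \<in> space M. X \<omega> = a} \<in> events" "{\<omega> \<in> space M. X \<omega> = b} \<in> events" "a \<noteq> b"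
    and "prob {\<omega> \<in> space M. X \<omega> = a} = \<rho>" "prob {\<omega> \<in> space M. X \<omega> = b} = 1 - \<rho>"
  shows "AE \<omega> in M. X \<omega> = a \<or> X \<omega> = b"
proof -
  have "prob ({\<omega> \<in> space M. X \<omega> = a} \<union> {\<omega> \<in> space M. X \<omega> = b}) = 1"
    using finite_measure_Union[OF assms(1,2)] assms(3-5) by auto
  then have "AE \<omega> in M. \<omega> \<in> {\<omega> \<in> space M. X \<omega> = a} \<union> {\<omega> \<in> space M. X \<omega> = b}"
    by (rule AE_prob_1)
  then show ?thesis
    by (rule AE_mp) auto
qed

lemma prob_indep_vars_pattern:
  assumes I: "finite I" "I \<noteq> {}" and indep: "indep_vars (\<lambda>_. K) X I" and S: "S \<in> sets K"
    and prob_S: "\<And>m. m \<in> I \<Longrightarrow> prob (X m -` S \<inter> space M) = \<rho>"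
    and B: "B \<subseteq> I"
  shows "prob (\<Inter>m\<in>I. X m -` (if m \<in> B then S else space K - S) \<inter> space M)
    = \<rho> ^ card B * (1 - \<rho>) ^ (card I - card B)"
proof -
  have "prob (\<Inter>m\<in>I. X m -` (if m \<in> B then S else space K - S) \<inter> space M)
      = (\<Prod>m\<in>I. prob (X m -` (if m \<in> B then S else space K - S) \<inter> space M))"
    using S by (intro indep_varsD_finite[OF indep I(2,1)]) auto
  also have "\<dots> = (\<Prod>m\<in>I. if m \<in> B then \<rho> else 1 - \<rho>)"
  proof (rule prod.cong[OF refl])
    fix m assume m: "m \<in> I"
    have X: "X m \<in> measurable M K"
      using indep m by (simp add: indep_vars_def)
    have "X m -` (space K - S) \<inter> space M = space M - (X m -` S \<inter> space M)"
      using measurable_space[OF X] by auto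
    then show "prob (X m -` (if m \<in> B then S else space K - S) \<inter> space M)
        = (if m \<in> B then \<rho> else 1 - \<rho>)"
      using prob_S[OF m] prob_compl[OF measurable_sets[OF X S]] by simp
  qed
  also have "\<dots> = \<rho> ^ card B * (1 - \<rho>) ^ (card I - card B)"
    using I B by (simp add: prod.If_cases Int_absorb1 Diff_eq[symmetric] card_Diff_subset finite_subset)
  finally show ?thesis .
qed

lemma expectation_count_indep_vars:
  fixes h :: "nat \<Rightarrow> real"
  assumes I: "finite I" and indep: "indep_vars (\<lambda>_. K) X I" and S: "S \<in> sets K"
    and prob_S: "\<And>m. m \<in> I \<Longrightarrow> prob (X m -` S \<inter> space M) = \<rho>"
  shows "expectation (\<lambda>\<omega>. h (card {m \<in> I. X m \<omega> \<in> S}))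
    = (\<Sum>k=0..card I. real (card I choose k) * h k * \<rho> ^ k * (1 - \<rho>) ^ (card I - k))"
proof (cases "I = {}")
  case True
  then show ?thesis
    by (simp add: prob_space)
next
  case False
  define E where "E B = (\<Inter>m\<in>I. X m -` (if m \<in> B then S else space K - S) \<inter> space M)" for B
  have X: "X m \<in> measurable M K" if "m \<in> I" for m
    using indep that by (simp add: indep_vars_def)
  have E_sets: "E B \<in> events" for B
    unfolding E_def using I False S by (intro sets.finite_INT) (auto intro: measurable_sets[OF X])
  have E_iff: "\<omega> \<in> E B \<longleftrightarrow> B = {m \<in> I. X m \<omega> \<in> S}" if "\<omega> \<in> space M" "B \<subseteq> I" for \<omega> B
    using that False measurable_space[OF X] unfolding E_def by auto
  have count: "h (card {m \<in> I. X m \<omega> \<in> S}) = (\<Sum>B\<in>Pow I. h (card B) * indicator (E B) \<omega>)"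
    if "\<omega> \<in> space M" for \<omega>
    using I by (simp add: indicator_def E_iff[OF that] if_distrib sum.delta')
  have "expectation (\<lambda>\<omega>. h (card {m \<in> I. X m \<omega> \<in> S}))
      = expectation (\<lambda>\<omega>. \<Sum>B\<in>Pow I. h (card B) * indicator (E B) \<omega>)"
    by (rule Bochner_Integration.integral_cong[OF refl count])
  also have "\<dots> = (\<Sum>B\<in>Pow I. h (card B) * prob (E B))"
    using E_sets by (subst Bochner_Integration.integral_sum) (auto simp: emeasure_eq_measure)
  also have "\<dots> = (\<Sum>B\<in>Pow I. h (card B) * \<rho> ^ card B * (1 - \<rho>) ^ (card I - card B))"
    unfolding E_def using prob_indep_vars_pattern[OF I False indep S prob_S] by (simp add: mult.assoc)
  also have "\<dots> = (\<Sum>k=0..card I. real (card I choose k) * h k * \<rho> ^ k * (1 - \<rho>) ^ (card I - k))"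
    using sum_Pow_by_card[OF I, of "\<lambda>k. h k * \<rho> ^ k * (1 - \<rho>) ^ (card I - k)"] by (simp add: mult.assoc)
  finally show ?thesis .
qed

text \<open>The votes are \<open>s\<close> or \<open>-s\<close> almost surely, and on that event
  \<open>s\<close> times their sum is \<open>s\<^sup>2 (2k - n)\<close> with \<open>k\<close> the number of votes equal to \<open>s\<close>.\<close>
lemma expectation_sgn_sum_indep_signs:
  fixes X :: "'i \<Rightarrow> 'a \<Rightarrow> real"
  assumes I: "finite I" and indep: "indep_vars (\<lambda>_. borel) X I" and "s \<noteq> 0"
    and prob_pos: "\<And>m. m \<in> I \<Longrightarrow> prob {\<omega> \<in> space M. X m \<omega> = s} = \<rho>"
    and prob_neg: "\<And>m. m \<in> I \<Longrightarrow> prob {\<omega> \<in> space M. X m \<omega> = - s} = 1 - \<rho>"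
  shows "expectation (\<lambda>\<omega>. sgn (s * (\<Sum>m\<in>I. X m \<omega>))) = majority_bias (card I) \<rho>"
proof -
  define k where "k \<omega> = card {m \<in> I. X m \<omega> = s}" for \<omega>
  have X_meas[measurable]: "X m \<in> borel_measurable M" if "m \<in> I" for m
    using indep that by (simp add: indep_vars_def)
  have votes: "(\<Sum>m\<in>I. if X m \<omega> = s then 1 else -1 :: real) = 2 * real (k \<omega>) - real (card I)"
    for \<omega>
  proof -
    have "(\<Sum>m\<in>I. if X m \<omega> = s then 1 else -1 :: real)
        = 1 * (2 * real (card {m \<in> I. (if X m \<omega> = s then 1 else -1 :: real) = 1}) - real (card I))"
      using I by (rule sum_plus_minus) auto
    also have "{m \<in> I. (if X m \<omega> = s then 1 else -1 :: real) = 1} = {m \<in> I. X m \<omega> = s}"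
      by auto
    finally show ?thesis
      by (simp add: k_def)
  qed
  have "AE \<omega> in M. \<forall>m\<in>I. X m \<omega> = s \<or> X m \<omega> = - s"
  proof (rule AE_finite_allI[OF I])
    fix m assume m: "m \<in> I"
    have "{\<omega> \<in> space M. X m \<omega> = v} \<in> events" for v
      using X_meas[OF m] by measurable
    then show "AE \<omega> in M. X m \<omega> = s \<or> X m \<omega> = - s"
      using m \<open>s \<noteq> 0\<close> prob_pos prob_neg by (intro AE_eq_or_eq) auto
  qed
  moreover have "sgn (s * (\<Sum>m\<in>I. X m \<omega>)) = sgn (2 * real (k \<omega>) - real (card I))"
    if "\<forall>m\<in>I. X m \<omega> = s \<or> X m \<omega> = - s" for \<omega>
  proof -
    have "sgn s * sgn s = 1"
      using \<open>s \<noteq> 0\<close> by (simp add: sgn_real_def)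
    then show ?thesis
      using sum_plus_minus[OF I, of "\<lambda>m. X m \<omega>" s] that
      by (simp add: k_def sgn_mult mult.assoc[symmetric])
  qed
  ultimately have "AE \<omega> in M. sgn (s * (\<Sum>m\<in>I. X m \<omega>))
      = sgn (\<Sum>m\<in>I. if X m \<omega> = s then 1 else -1 :: real)"
    unfolding votes by (rule eventually_mono)
  then have "expectation (\<lambda>\<omega>. sgn (s * (\<Sum>m\<in>I. X m \<omega>)))
      = expectation (\<lambda>\<omega>. sgn (2 * real (k \<omega>) - real (card I)))"
    unfolding votes[symmetric] by (intro integral_cong_AE) auto
  also have "\<dots> = majority_bias (card I) \<rho>"
  proof -
    have "X m -` {s} \<inter> space M = {\<omega> \<in> space M. X m \<omega> = s}" for m
      by auto
    then show ?thesis
      using expectation_count_indep_vars[OF I indep, of "{s}" \<rho> "\<lambda>k. sgn (2 * real k - real (card I))"]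
        prob_pos unfolding k_def majority_bias_def by (simp add: mult_ac)
  qed
  finally show ?thesis .
qed

end

theorem mainTheorem4:
  fixes N :: "'a measure"
    and g :: "real ^ 'd \<Rightarrow> real ^ 'd"
    and x :: "real ^ 'd"
    and i :: 'd
    and ghat :: "nat \<Rightarrow> 'a \<Rightarrow> real ^ 'd"
    and M :: nat
    and \<rho> :: real
  assumes "prob_space N"
    and "g x $ i \<noteq> 0"
    and "M \<ge> 1"
    and "prob_space.indep_vars N (\<lambda>_. borel) ghat {1..M}"
    and "\<And>m. m \<in> {1..M} \<Longrightarrow>
           measure N {\<omega> \<in> space N. sgn (ghat m \<omega> $ i) = sgn (g x $ i)} = \<rho>"
    and "\<And>m. m \<in> {1..M} \<Longrightarrow>
           measure N {\<omega> \<in> space N. sgn (ghat m \<omega> $ i) = - sgn (g x $ i)} = 1 - \<rho>"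
    and "\<rho> > 1/2"
  shows "prob_space.expectation N
           (\<lambda>\<omega>. sgn ((\<Sum>m\<in>{1..M}. sign_vec (ghat m \<omega>)) $ i * g x $ i))
         = 2 * inc_beta \<rho> (real ((M + 1) div 2)) (real ((M + 1) div 2)) - 1"
proof -
  interpret prob_space N by fact
  define s where "s = sgn (g x $ i)"
  define X where "X m \<omega> = sgn (ghat m \<omega> $ i)" for m \<omega>
  have "(\<lambda>v::real^'d. v $ i) \<in> borel_measurable borel"
    by (intro borel_measurable_continuous_onI continuous_on_component continuous_on_id)
  then have "(\<lambda>v::real^'d. sgn (v $ i)) \<in> borel_measurable borel"
    by measurable
  then have indep: "indep_vars (\<lambda>_. borel) X {1..M}"
    using indep_vars_compose[OF assms(4), of "\<lambda>_ v. sgn (v $ i)" "\<lambda>_. borel"]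
    unfolding X_def[abs_def] by (simp add: comp_def)
  have "sgn ((\<Sum>m\<in>{1..M}. sign_vec (ghat m \<omega>)) $ i * g x $ i) = sgn (s * (\<Sum>m\<in>{1..M}. X m \<omega>))"
    for \<omega>
    by (simp add: sign_vec_def sum_component X_def s_def sgn_mult mult.commute)
  then have "expectation (\<lambda>\<omega>. sgn ((\<Sum>m\<in>{1..M}. sign_vec (ghat m \<omega>)) $ i * g x $ i))
      = majority_bias M \<rho>"
    using expectation_sgn_sum_indep_signs[OF _ indep, of s \<rho>] assms(2,5,6)
    by (simp add: X_def s_def sgn_zero_iff)
  also have "\<dots> = 2 * inc_beta \<rho> (real ((M + 1) div 2)) (real ((M + 1) div 2)) - 1"
  proof (rule majority_bias_eq_inc_beta)
    show "\<rho> \<le> 1"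
      using assms(3,6) measure_nonneg[of N "{\<omega> \<in> space N. sgn (ghat 1 \<omega> $ i) = - s}"]
      by (simp add: s_def)
  qed (use assms(3,7) in auto)
  finally show ?thesis .
qed

end
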